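(* Let $x \in (-1/\phi, 1/\phi)$, where $\phi = (1+\sqrt{5})/2$, and let $m \geq 1$ be an integer. Then \[ \sum_{r=1}^{\infty} r^m F_r x^r = \frac{1}{1 - x - x^2} \sum_{i=1}^m \binom{m}{i} (-1)^{i + 1} \sum_{r=1}^{\infty} r^{m - i} F_r x^r + \frac{x^2}{1 - x - x^2} \sum_{i=1}^m \binom{m}{i} \sum_{r=1}^{\infty} r^{m - i} F_r x^r . \]
   Context: $(F_r)_{r \geq 0}$ is the Fibonacci sequence: $F_0 = 0$, $F_1 = 1$, $F_r = F_{r-1} + F_{r-2}$ for $r \geq 2$. For every integer $j \ge 0$ and $x \in (-1/\phi,1/\phi)$ the series $\sum_{r\ge1} r^j F_r x^r$ converges. *)

theory Defs
  imports "HOL-Analysis.Analysis" "HOL-Number_Theory.Fib"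
begin

definition phi :: real where "phi = (1 + sqrt 5) / 2"

definition fibS :: "nat \<Rightarrow> real \<Rightarrow> real" where
  "fibS j x = (\<Sum>r. real (Suc r) ^ j * real (fib (Suc r)) * x ^ (Suc r))"

end

theory Submission
  imports Defs
begin

text \<open>Shifting the index in the recurrence \<open>F (n + 2) = F (n + 1) + F n\<close> gives
  \<open>\<Sum>n. (n - 1)^m F n x^n = x \<Sum>n. n^m F n x^n + x\<^sup>2 \<Sum>n. (n + 1)^m F n x^n\<close>
  (the terms \<open>n = 0, 1\<close> vanish as \<open>m \<ge> 1\<close>).  Expanding \<open>(n \<plusminus> 1)^m\<close> binomially
  writes both outer series as \<open>S m\<close> plus the two sums of the statement, and solving for
  \<open>S m\<close> uses \<open>1 - x - x\<^sup>2 = (1/\<phi> - x)(x + \<phi>) > 0\<close>.  All series converge because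
  \<open>F n \<le> \<phi>^n\<close>.\<close>

lemma phi_squared: "phi\<^sup>2 = phi + 1"
  unfolding phi_def by (simp add: power2_eq_square field_simps)

lemma one_less_phi: "1 < phi"
  unfolding phi_def by simp

lemma inverse_phi: "1 / phi = phi - 1"
  using phi_squared one_less_phi by (simp add: field_simps power2_eq_square)

lemma fib_le_phi_power: "real (fib n) \<le> phi ^ n"
proof (induction n rule: fib.induct)
  case (3 n)
  have "real (fib (Suc (Suc n))) = real (fib (Suc n)) + real (fib n)" by simp
  also have "\<dots> \<le> phi ^ Suc n + phi ^ n" using 3 by simp
  also have "\<dots> = phi ^ n * (phi + 1)" by (simp add: algebra_simps)
  also have "\<dots> = phi ^ Suc (Suc n)" by (simp add: phi_squared[symmetric] power2_eq_square)
  finally show ?case .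
qed (use one_less_phi in simp_all)

lemma one_minus_x_minus_square_pos:
  fixes x :: real
  assumes "\<bar>x\<bar> < 1 / phi"
  shows "0 < 1 - x - x\<^sup>2"
proof -
  have "1 - x - x\<^sup>2 = (1 / phi - x) * (x + phi)"
    unfolding inverse_phi by (simp add: algebra_simps power2_eq_square phi_squared[symmetric])
  moreover have "0 < x + phi"
    using assms one_less_phi inverse_phi by linarith
  ultimately show ?thesis
    using assms by simp
qed

lemma summable_real_power_mult_geometric:
  fixes q :: real
  assumes "\<bar>q\<bar> < 1"
  shows "summable (\<lambda>n. real n ^ j * q ^ n)"
proof (rule root_test_convergence')
  have "eventually (\<lambda>n. root n (norm (real n ^ j * q ^ n)) = root n (real n) ^ j * \<bar>q\<bar>) sequentially"
    using eventually_gt_at_top[of 0]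
    by eventually_elim (simp add: abs_mult power_abs real_root_mult real_root_power real_root_power_cancel)
  moreover have "(\<lambda>n. root n (real n) ^ j * \<bar>q\<bar>) \<longlonglongrightarrow> 1 ^ j * \<bar>q\<bar>"
    by (intro tendsto_intros LIMSEQ_root)
  ultimately have "(\<lambda>n. root n (norm (real n ^ j * q ^ n))) \<longlonglongrightarrow> \<bar>q\<bar>"
    by (simp add: tendsto_cong)
  then show "limsup (\<lambda>n. ereal (root n (norm (real n ^ j * q ^ n)))) < 1"
    using limsup_root_limit'[of "\<lambda>n. real n ^ j * q ^ n" "\<bar>q\<bar>"] assms by simp
qed

lemma summable_fib_power_series:
  fixes x :: real
  assumes "\<bar>x\<bar> < 1 / phi"
  shows "summable (\<lambda>n. real n ^ j * real (fib n) * x ^ n)"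
proof (rule summable_comparison_test)
  have "\<bar>phi * \<bar>x\<bar>\<bar> < 1"
    using assms one_less_phi by (simp add: abs_mult field_simps)
  then show "summable (\<lambda>n. real n ^ j * (phi * \<bar>x\<bar>) ^ n)"
    by (rule summable_real_power_mult_geometric)
  have "norm (real n ^ j * real (fib n) * x ^ n) \<le> real n ^ j * (phi * \<bar>x\<bar>) ^ n" for n
    using fib_le_phi_power[of n]
    by (simp add: abs_mult power_abs power_mult_distrib mult.assoc mult_left_mono mult_right_mono)
  then show "\<exists>N. \<forall>n\<ge>N. norm (real n ^ j * real (fib n) * x ^ n) \<le> real n ^ j * (phi * \<bar>x\<bar>) ^ n"
    by blast
qed

lemma sums_fibS:
  fixes x :: real
  assumes "\<bar>x\<bar> < 1 / phi"
  shows "(\<lambda>n. real n ^ j * real (fib n) * x ^ n) sums fibS j x"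
proof -
  have "summable (\<lambda>n. real (Suc n) ^ j * real (fib (Suc n)) * x ^ Suc n)"
    using summable_fib_power_series[OF assms] by (rule summable_Suc_iff[THEN iffD2])
  then have "(\<lambda>n. real (Suc n) ^ j * real (fib (Suc n)) * x ^ Suc n) sums fibS j x"
    unfolding fibS_def by (rule summable_sums)
  then show ?thesis
    using sums_Suc_iff[of "\<lambda>n. real n ^ j * real (fib n) * x ^ n" "fibS j x"] by simp
qed

lemma sums_fib_shifted_power_series:
  fixes x c :: real
  assumes "\<bar>x\<bar> < 1 / phi"
  shows "(\<lambda>n. (real n + c) ^ m * real (fib n) * x ^ n) sums
           (fibS m x + (\<Sum>k=1..m. real (m choose k) * c ^ k * fibS (m - k) x))"
proof -
  have "(\<lambda>n. \<Sum>k\<le>m. real (m choose k) * c ^ k * (real n ^ (m - k) * real (fib n) * x ^ n))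
          sums (\<Sum>k\<le>m. real (m choose k) * c ^ k * fibS (m - k) x)"
    by (intro sums_sum sums_mult sums_fibS assms)
  moreover have "(real n + c) ^ m * real (fib n) * x ^ n =
      (\<Sum>k\<le>m. real (m choose k) * c ^ k * (real n ^ (m - k) * real (fib n) * x ^ n))" for n
    by (simp add: binomial_ring[of c "real n"] add.commute sum_distrib_right mult.assoc)
  moreover have "{..m} = insert 0 {1..m}"
    by auto
  ultimately show ?thesis
    by simp
qed

lemma fib_weighted_series_recurrence:
  fixes x :: real
  assumes "m \<ge> 1"
    and "summable (\<lambda>n. real n ^ m * real (fib n) * x ^ n)"
    and "summable (\<lambda>n. (real n + 1) ^ m * real (fib n) * x ^ n)"
  shows "(\<lambda>n. (real n - 1) ^ m * real (fib n) * x ^ n) sums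
           (x * (\<Sum>n. real n ^ m * real (fib n) * x ^ n)
            + x\<^sup>2 * (\<Sum>n. (real n + 1) ^ m * real (fib n) * x ^ n))"
proof -
  have "(\<lambda>n. real (Suc n) ^ m * real (fib (Suc n)) * x ^ Suc n)
          sums (\<Sum>n. real n ^ m * real (fib n) * x ^ n)"
    using sums_Suc_iff summable_sums[OF assms(2)] by fastforce
  then have "(\<lambda>n. x * (real (Suc n) ^ m * real (fib (Suc n)) * x ^ Suc n)
                + x\<^sup>2 * ((real n + 1) ^ m * real (fib n) * x ^ n))
          sums (x * (\<Sum>n. real n ^ m * real (fib n) * x ^ n)
                + x\<^sup>2 * (\<Sum>n. (real n + 1) ^ m * real (fib n) * x ^ n))"
    by (intro sums_add sums_mult summable_sums assms(3))
  moreover have "(real (n + 2) - 1) ^ m * real (fib (n + 2)) * x ^ (n + 2) =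
      x * (real (Suc n) ^ m * real (fib (Suc n)) * x ^ Suc n)
      + x\<^sup>2 * ((real n + 1) ^ m * real (fib n) * x ^ n)" for n
    by (simp add: fib_plus_2 power2_eq_square algebra_simps)
  ultimately have shifted: "(\<lambda>n. (real (n + 2) - 1) ^ m * real (fib (n + 2)) * x ^ (n + 2))
          sums (x * (\<Sum>n. real n ^ m * real (fib n) * x ^ n)
                + x\<^sup>2 * (\<Sum>n. (real n + 1) ^ m * real (fib n) * x ^ n))"
    by simp
  have vanish: "(real n - 1) ^ m * real (fib n) * x ^ n = 0" if "n < 2" for n
    using that assms(1) by (auto simp: less_2_cases_iff)
  show ?thesis
    using shifted by (subst sums_zero_iff_shift[of 2, symmetric]) (use vanish in auto)
qed

lemma one_minus_x_minus_square_mult_fibS: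
  fixes x :: real
  assumes x: "\<bar>x\<bar> < 1 / phi" and "m \<ge> 1"
  shows "(1 - x - x\<^sup>2) * fibS m x =
    (\<Sum>i=1..m. real (m choose i) * (-1) ^ (i + 1) * fibS (m - i) x)
    + x\<^sup>2 * (\<Sum>i=1..m. real (m choose i) * fibS (m - i) x)"
    (is "_ = ?A + x\<^sup>2 * ?B")
proof -
  have "(\<Sum>k=1..m. real (m choose k) * (-1) ^ k * fibS (m - k) x) = - ?A"
    by (simp add: sum_negf[symmetric])
  then have "(\<lambda>n. (real n + -1) ^ m * real (fib n) * x ^ n) sums (fibS m x + - ?A)"
    using sums_fib_shifted_power_series[OF x, of "-1" m] by (simp only:)
  then have lower: "(\<lambda>n. (real n - 1) ^ m * real (fib n) * x ^ n) sums (fibS m x - ?A)"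
    by (simp only: diff_conv_add_uminus)
  have upper: "(\<lambda>n. (real n + 1) ^ m * real (fib n) * x ^ n) sums (fibS m x + ?B)"
    using sums_fib_shifted_power_series[OF x, of 1 m] by simp
  have "(\<lambda>n. (real n - 1) ^ m * real (fib n) * x ^ n) sums
          (x * fibS m x + x\<^sup>2 * (fibS m x + ?B))"
    using fib_weighted_series_recurrence[OF assms(2) sums_summable[OF sums_fibS[OF x]]
        sums_summable[OF upper]]
    unfolding sums_unique[OF sums_fibS[OF x], symmetric] sums_unique[OF upper, symmetric] .
  with lower have "fibS m x - ?A = x * fibS m x + x\<^sup>2 * (fibS m x + ?B)"
    by (rule sums_unique2)
  then show ?thesis
    by (simp add: algebra_simps)
qed

theorem theorem4p1:
  fixes x :: real and m :: nat
  assumes "- 1 / phi < x" and "x < 1 / phi" and "m \<ge> 1"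
  shows "fibS m x =
    1 / (1 - x - x^2) * (\<Sum>i=1..m. real (m choose i) * (-1) ^ (i + 1) * fibS (m - i) x)
    + x^2 / (1 - x - x^2) * (\<Sum>i=1..m. real (m choose i) * fibS (m - i) x)"
proof -
  have x: "\<bar>x\<bar> < 1 / phi"
    using assms(1,2) by auto
  have solve: "s = 1 / d * a + x\<^sup>2 / d * b" if "0 < d" and "d * s = a + x\<^sup>2 * b"
    for s a b d :: real
    using that by (simp add: field_simps)
  show ?thesis
    by (rule solve[OF one_minus_x_minus_square_pos[OF x] one_minus_x_minus_square_mult_fibS[OF x assms(3)]])
qed

end
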